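(* Let $l$ be a prime and $n\ge 2$. For $1\le r\le n$ let $\alpha_r\in S_{l^n}$ be the product of the $l^{r-1}$ disjoint $l$-cycles $(j,\ j+l^{r-1},\ j+2l^{r-1},\dots,\ j+(l-1)l^{r-1})$, $j=1,\dots,l^{r-1}$ (so $\alpha_1=(1\,2\,\cdots\,l)$), and let $\mathcal{G}_n=\langle\alpha_1,\dots,\alpha_n\rangle$, an $l$-Sylow subgroup of $S_{l^n}$ isomorphic to the $n$-fold iterated wreath product $(\cdots((C_l\wr C_l)\wr C_l)\cdots)\wr C_l$. Let $\mathcal{H}=\langle\alpha_1\rangle$. If $n\ge 3$, or if $n=2$ and $l\ge 5$, then every metacyclic subgroup $D\le\mathcal{G}_n$ satisfies $S(D,\mathcal{H})>1$ (double cosets in $\mathcal{G}_n$).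
   Context: A group is metacyclic if it has a cyclic normal subgroup with cyclic quotient. For subgroups $A,B$ of a finite group $\mathcal{G}$, a double coset $AxB$ is split if $|AxB|=|A||B|$ (equivalently $x^{-1}Ax\cap B=1$), and $S(A,B)$ is the number of distinct split double cosets. *)

theory Defs
  imports "HOL-Computational_Algebra.Primes" "HOL-Algebra.Sym_Groups" "HOL-Algebra.Elementary_Groups"
begin

definition alpha :: "nat \<Rightarrow> nat \<Rightarrow> (nat \<Rightarrow> nat)" where
  "alpha l r = foldr (\<lambda>j f. cycle_of_list (map (\<lambda>k. j + k * l ^ (r - 1)) [0..<l]) \<circ> f)
                     [1..<l ^ (r - 1) + 1] id"

definition Gn :: "nat \<Rightarrow> nat \<Rightarrow> (nat \<Rightarrow> nat) monoid" where
  "Gn l n = subgroup_generated (sym_group (l ^ n)) {alpha l r | r. 1 \<le> r \<and> r \<le> n}"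

definition Hsub :: "nat \<Rightarrow> nat \<Rightarrow> (nat \<Rightarrow> nat) set" where
  "Hsub l n = generate (Gn l n) {alpha l 1}"

definition metacyclic_subgroup :: "('a, 'b) monoid_scheme \<Rightarrow> 'a set \<Rightarrow> bool" where
  "metacyclic_subgroup G D \<longleftrightarrow>
     (\<exists>N. N \<lhd> G\<lparr>carrier := D\<rparr> \<and> cyclic_group (G\<lparr>carrier := N\<rparr>)
          \<and> cyclic_group (G\<lparr>carrier := D\<rparr> Mod N))"

definition double_coset :: "('a, 'b) monoid_scheme \<Rightarrow> 'a set \<Rightarrow> 'a \<Rightarrow> 'a set \<Rightarrow> 'a set" where
  "double_coset G A x B = {a \<otimes>\<^bsub>G\<^esub> x \<otimes>\<^bsub>G\<^esub> b | a b. a \<in> A \<and> b \<in> B}"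

text \<open>S(A,B): number of distinct split double cosets A x B (|AxB| = |A||B|), x in G.\<close>
definition split_count :: "('a, 'b) monoid_scheme \<Rightarrow> 'a set \<Rightarrow> 'a set \<Rightarrow> nat" where
  "split_count G A B = card {double_coset G A x B | x. x \<in> carrier G \<and>
      card (double_coset G A x B) = card A * card B}"

end

theory Submission
  imports Defs "HOL-Algebra.Multiplicative_Group"
begin

(* Write a = alpha_1, H = <a>, and note a^l = 1.  For x in G_n the double coset
   D x H is split as soon as x a x^-1 is not in D (then x H x^-1 meets D trivially, l being
   prime).  A metacyclic group contains at most l^2 pairwise commuting elements of exponent l
   (at most l of them modulo the cyclic normal subgroup N, and at most l in each coset of N).
   G_n contains four disjoint l-cycles c_0 = a, c_1, c_2, c_3, all conjugate to a; they
   generate an elementary abelian subgroup E of order l^4.  As l^4 > l^2, some c_i = x0 a x0^-1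
   lies outside D, giving one split double coset; since E centralises a, each x0 e (e in E)
   gives a split double coset too, and if all of them were D x0 H, then E would be covered by
   F H with |F| <= l^2 and |H| <= l, contradicting |E| = l^4 > l^3. *)

section \<open>Double cosets\<close>

lemma double_coset_eq_image:
  "double_coset G A x B = (\<lambda>(a, b). a \<otimes>\<^bsub>G\<^esub> x \<otimes>\<^bsub>G\<^esub> b) ` (A \<times> B)"
  unfolding double_coset_def by auto

lemma split_count_gt_oneI:
  assumes fin: "finite (carrier G)" and xy: "x \<in> carrier G" "y \<in> carrier G"
    and split: "card (double_coset G A x B) = card A * card B"
      "card (double_coset G A y B) = card A * card B"
    and ne: "double_coset G A x B \<noteq> double_coset G A y B"
  shows "1 < split_count G A B"
proof -
  define S where "S = {double_coset G A z B | z. z \<in> carrier G \<and>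
      card (double_coset G A z B) = card A * card B}"
  have "finite S"
    using fin unfolding S_def by (auto intro: finite_subset[of _ "(\<lambda>z. double_coset G A z B) ` carrier G"])
  moreover have "{double_coset G A x B, double_coset G A y B} \<subseteq> S"
    unfolding S_def using xy split by blast
  ultimately have "card {double_coset G A x B, double_coset G A y B} \<le> card S"
    by (rule card_mono)
  then show ?thesis using ne unfolding split_count_def S_def by simp
qed

section \<open>Group-theoretic part\<close>

context group
begin

lemma inv_mult_cancel_left [simp]: "x \<in> carrier G \<Longrightarrow> y \<in> carrier G \<Longrightarrow> inv x \<otimes> (x \<otimes> y) = y"
  by (simp add: m_assoc[symmetric])

lemma mult_inv_cancel_left [simp]: "x \<in> carrier G \<Longrightarrow> y \<in> carrier G \<Longrightarrow> x \<otimes> (inv x \<otimes> y) = y"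
  by (simp add: m_assoc[symmetric])

lemma pow_mod_exponent:
  fixes l k :: nat
  assumes x: "x \<in> carrier G" and xl: "x [^] l = \<one>"
  shows "x [^] k = x [^] (k mod l)"
proof -
  have "x [^] k = x [^] (l * (k div l) + k mod l)"
    by (simp only: mult_div_mod_eq)
  also have "\<dots> = x [^] (l * (k div l)) \<otimes> x [^] (k mod l)"
    using x by (simp add: nat_pow_mult)
  also have "\<dots> = x [^] (k mod l)"
    using x xl by (simp add: nat_pow_pow[symmetric])
  finally show ?thesis .
qed

lemma card_roots_cyclic_le:
  fixes l :: nat
  assumes cyc: "cyclic_group G" and fin: "finite (carrier G)" and l: "0 < l"
  shows "card {y \<in> carrier G. y [^] l = \<one>} \<le> l"
proof -
  obtain g where g: "g \<in> carrier G" "subgroup_generated G {g} = G"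
    using cyc unfolding cyclic_group_def by blast
  have "carrier G = generate G {g}"
    by (metis g carrier_subgroup_generated inf.absorb2 empty_subsetI insert_subset)
  also have "\<dots> = {g [^] k | k. k \<in> (UNIV :: nat set)}"
    using generate_pow_on_finite_carrier[OF fin g(1)] .
  finally have carr: "carrier G = {g [^] k | k. k \<in> (UNIV :: nat set)}" .
  define m where "m = ord g"
  have m: "0 < m" using ord_ge_1[OF fin g(1)] m_def by simp
  define K where "K = {k. k < m \<and> m dvd k * l}"
  have roots: "{y \<in> carrier G. y [^] l = \<one>} \<subseteq> (\<lambda>k. g [^] k) ` K"
  proof clarify
    fix y assume y: "y \<in> carrier G" "y [^] l = \<one>"
    then obtain k :: nat where "y = g [^] k" using carr by auto
    then have yk: "y = g [^] (k mod m)"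
      using pow_mod_exponent[OF g(1) pow_ord_eq_1[OF g(1)]] m_def by simp
    then have "g [^] ((k mod m) * l) = \<one>" using y g(1) by (simp add: nat_pow_pow)
    then have "m dvd (k mod m) * l" using pow_eq_id[OF g(1)] m_def by blast
    moreover have "k mod m < m" using m by simp
    ultimately have "k mod m \<in> K" unfolding K_def by blast
    with yk show "y \<in> (\<lambda>k. g [^] k) ` K" by (rule image_eqI)
  qed
  \<comment> \<open>A multiple \<open>k l\<close> of \<open>m\<close> with \<open>k < m\<close> is determined by the quotient \<open>k l / m < l\<close>.\<close>
  have "inj_on (\<lambda>k. k * l div m) K"
  proof (rule inj_onI)
    fix x y assume x: "x \<in> K" and y: "y \<in> K" and eq: "x * l div m = y * l div m"
    have "x * l = (x * l div m) * m" using x unfolding K_def by simp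
    also have "\<dots> = y * l" using y eq unfolding K_def by simp
    finally show "x = y" using l by simp
  qed
  moreover have "(\<lambda>k. k * l div m) ` K \<subseteq> {..<l}"
  proof clarify
    fix k assume "k \<in> K"
    then have "k * l < m * l" using l unfolding K_def by simp
    then show "k * l div m < l" using m by (simp add: div_less_iff_less_mult mult.commute)
  qed
  ultimately have "card K \<le> l"
    using card_inj_on_le[of _ K "{..<l}"] by simp
  moreover have "card {y \<in> carrier G. y [^] l = \<one>} \<le> card K"
  proof -
    have "finite K" unfolding K_def by simp
    then show ?thesis
      using card_mono[OF finite_imageI roots] card_image_le[of K "\<lambda>k. g [^] k"] by linarith
  qed
  ultimately show ?thesis by simp
qed

lemma commute_inv:
  assumes x: "x \<in> carrier G" and y: "y \<in> carrier G" and xy: "x \<otimes> y = y \<otimes> x"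
  shows "x \<otimes> inv y = inv y \<otimes> x"
proof -
  have "x \<otimes> inv y = inv y \<otimes> (y \<otimes> x) \<otimes> inv y"
    using x y by (simp add: m_assoc[symmetric])
  also have "\<dots> = inv y \<otimes> x"
    using x y by (simp add: xy[symmetric] m_assoc)
  finally show ?thesis .
qed

lemma card_le_image_times_differences:
  assumes F: "F \<subseteq> carrier G" and A: "finite A" "\<phi> ` F \<subseteq> A" and R: "finite R"
    and diff: "\<And>f f'. f \<in> F \<Longrightarrow> f' \<in> F \<Longrightarrow> \<phi> f = \<phi> f' \<Longrightarrow> f \<otimes> inv f' \<in> R"
  shows "card F \<le> card A * card R"
proof -
  define rep where "rep q = (SOME f. f \<in> F \<and> \<phi> f = q)" for q
  have rep: "rep (\<phi> f) \<in> F \<and> \<phi> (rep (\<phi> f)) = \<phi> f" if "f \<in> F" for f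
  proof -
    have "\<exists>g. g \<in> F \<and> \<phi> g = \<phi> f" using that by blast
    then show ?thesis unfolding rep_def by (rule someI_ex)
  qed
  define \<psi> where "\<psi> f = (\<phi> f, f \<otimes> inv (rep (\<phi> f)))" for f
  have "inj_on \<psi> F"
  proof (rule inj_onI)
    fix f f' assume f: "f \<in> F" "f' \<in> F" and eq: "\<psi> f = \<psi> f'"
    then have "\<phi> f = \<phi> f'" unfolding \<psi>_def by simp
    with eq have "f \<otimes> inv (rep (\<phi> f)) = f' \<otimes> inv (rep (\<phi> f))" unfolding \<psi>_def by simp
    moreover have "rep (\<phi> f) \<in> carrier G" using rep[OF f(1)] F by blast
    moreover have "f \<in> carrier G" "f' \<in> carrier G" using f F by blast+
    ultimately show "f = f'" by simp
  qed
  moreover have "\<psi> ` F \<subseteq> A \<times> R"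
  proof (rule image_subsetI)
    fix f assume f: "f \<in> F"
    then have "\<phi> f \<in> A" using A(2) by blast
    moreover have "f \<otimes> inv (rep (\<phi> f)) \<in> R" using diff[OF f] rep[OF f] by simp
    ultimately show "\<psi> f \<in> A \<times> R" unfolding \<psi>_def by simp
  qed
  ultimately have "card F \<le> card (A \<times> R)"
    using card_inj_on_le A(1) R by blast
  then show ?thesis by (simp add: card_cartesian_product)
qed

text \<open>In a finite metacyclic group (cyclic normal \<open>N\<close> with cyclic quotient \<open>G/N\<close>) a set of
  pairwise commuting elements of exponent \<open>l\<close> has at most \<open>l\<^sup>2\<close> elements: it meets at most
  \<open>l\<close> cosets of \<open>N\<close> (the \<open>l\<close>-th roots of unity of \<open>G/N\<close>), and two of its elements in the
  same coset differ by one of the at most \<open>l\<close> roots of unity of \<open>N\<close>.\<close>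
lemma metacyclic_group_exponent_card:
  fixes l :: nat
  assumes fin: "finite (carrier G)" and N: "N \<lhd> G"
    and N_cyc: "cyclic_group (G\<lparr>carrier := N\<rparr>)" and Q_cyc: "cyclic_group (G Mod N)"
    and l: "0 < l" and F: "F \<subseteq> carrier G"
    and F_exp: "\<And>f. f \<in> F \<Longrightarrow> f [^] l = \<one>"
    and F_comm: "\<And>f f'. f \<in> F \<Longrightarrow> f' \<in> F \<Longrightarrow> f \<otimes> f' = f' \<otimes> f"
  shows "card F \<le> l * l"
proof -
  interpret N: normal N G by (rule N)
  interpret NG: group "G\<lparr>carrier := N\<rparr>" by (rule subgroup_imp_group[OF N.subgroup_axioms])
  interpret Q: group "G Mod N" by (rule N.factorgroup_is_group)
  define R where "R = {y \<in> N. y [^] l = \<one>}"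
  have N_fin: "finite N" using N.subset fin finite_subset by blast
  have R: "card R \<le> l" "finite R"
    using NG.card_roots_cyclic_le[OF N_cyc _ l] N_fin by (simp_all add: R_def nat_pow_consistent[symmetric])
  define Qr where "Qr = {q \<in> carrier (G Mod N). q [^]\<^bsub>G Mod N\<^esub> l = \<one>\<^bsub>G Mod N\<^esub>}"
  have Qr: "card Qr \<le> l" "finite Qr"
    using Q.card_roots_cyclic_le[OF Q_cyc _ l] fin by (simp_all add: Qr_def carrier_FactGroup)
  define \<phi> where "\<phi> x = N #> x" for x
  interpret \<phi>: group_hom G "G Mod N" \<phi>
    unfolding group_hom_def group_hom_axioms_def \<phi>_def
    using N.r_coset_hom_Mod is_group Q.group_axioms by blast
  have img: "\<phi> ` F \<subseteq> Qr"
  proof clarify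
    fix f assume "f \<in> F"
    then have f: "f \<in> carrier G" "f [^] l = \<one>" using F F_exp by auto
    have "\<phi> f [^]\<^bsub>G Mod N\<^esub> l = \<phi> (f [^] l)" by (rule \<phi>.hom_nat_pow[OF f(1), symmetric])
    also have "\<dots> = \<one>\<^bsub>G Mod N\<^esub>" by (simp only: f(2) \<phi>.hom_one)
    finally show "\<phi> f \<in> Qr" unfolding Qr_def using f by simp
  qed
  have diff: "f \<otimes> inv f' \<in> R" if f: "f \<in> F" "f' \<in> F" "\<phi> f = \<phi> f'" for f f'
  proof -
    have fG: "f \<in> carrier G" "f' \<in> carrier G" using f F by blast+
    have "f \<in> N #> f'" using rcos_self[OF fG(1) N.subgroup_axioms] f(3) unfolding \<phi>_def by simp
    then have "f \<otimes> inv f' \<in> N" by (rule N.rcos_module_imp[OF is_group fG(2)])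
    moreover have "f \<otimes> inv f' = inv f' \<otimes> f" using commute_inv F_comm f fG by blast
    then have "(f \<otimes> inv f') [^] l = \<one>" using fG f F_exp by (simp add: pow_mult_distrib nat_pow_inv)
    ultimately show ?thesis unfolding R_def by simp
  qed
  have "card F \<le> card Qr * card R"
    by (rule card_le_image_times_differences[OF F Qr(2) img R(2) diff])
  also have "\<dots> \<le> l * l" using Qr(1) R(1) by (rule mult_le_mono)
  finally show ?thesis .
qed

lemma metacyclic_exponent_card:
  fixes l :: nat
  assumes fin: "finite (carrier G)" and sD: "subgroup D G" and meta: "metacyclic_subgroup G D"
    and l: "0 < l" and FD: "F \<subseteq> D"
    and F_exp: "\<And>f. f \<in> F \<Longrightarrow> f [^] l = \<one>"
    and F_comm: "\<And>f f'. f \<in> F \<Longrightarrow> f' \<in> F \<Longrightarrow> f \<otimes> f' = f' \<otimes> f"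
  shows "card F \<le> l * l"
proof -
  define K where "K = G\<lparr>carrier := D\<rparr>"
  obtain N where N: "N \<lhd> K" "cyclic_group (G\<lparr>carrier := N\<rparr>)" "cyclic_group (K Mod N)"
    using meta unfolding metacyclic_subgroup_def K_def by blast
  interpret K: group K unfolding K_def by (rule subgroup_imp_group[OF sD])
  have "finite (carrier K)" unfolding K_def using finite_subset[OF subgroup.subset[OF sD] fin] by simp
  moreover have "K\<lparr>carrier := N\<rparr> = G\<lparr>carrier := N\<rparr>" "F \<subseteq> carrier K"
    unfolding K_def using FD by simp_all
  moreover have "f [^]\<^bsub>K\<^esub> l = \<one>\<^bsub>K\<^esub>" if "f \<in> F" for f
    using F_exp[OF that] unfolding K_def by (simp add: nat_pow_consistent[symmetric])
  moreover have "f \<otimes>\<^bsub>K\<^esub> f' = f' \<otimes>\<^bsub>K\<^esub> f" if "f \<in> F" "f' \<in> F" for f f'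
    using F_comm[OF that] unfolding K_def by simp
  ultimately show ?thesis
    using K.metacyclic_group_exponent_card[OF _ N(1) _ N(3) l] N(2) by simp
qed

lemma conj_mult:
  assumes "x \<in> carrier G" "u \<in> carrier G" "v \<in> carrier G"
  shows "(x \<otimes> u \<otimes> inv x) \<otimes> (x \<otimes> v \<otimes> inv x) = x \<otimes> (u \<otimes> v) \<otimes> inv x"
  using assms by (simp add: m_assoc)

lemma conj_pow:
  fixes n :: nat
  assumes x: "x \<in> carrier G" and u: "u \<in> carrier G"
  shows "(x \<otimes> u \<otimes> inv x) [^] n = x \<otimes> u [^] n \<otimes> inv x"
proof (induction n)
  case 0
  then show ?case using x by simp
next
  case (Suc n)
  have "(x \<otimes> u \<otimes> inv x) [^] Suc n = (x \<otimes> u [^] n \<otimes> inv x) \<otimes> (x \<otimes> u \<otimes> inv x)"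
    using Suc by simp
  also have "\<dots> = x \<otimes> u [^] n \<otimes> (inv x \<otimes> x) \<otimes> u \<otimes> inv x"
    using x u by (simp only: m_assoc nat_pow_closed inv_closed m_closed)
  also have "\<dots> = x \<otimes> u [^] Suc n \<otimes> inv x"
    using x u by (simp add: m_assoc)
  finally show ?case .
qed

lemma conj_metacyclic_exponent_card:
  fixes l :: nat
  assumes fin: "finite (carrier G)" and sD: "subgroup D G" and meta: "metacyclic_subgroup G D"
    and l: "0 < l" and x: "x \<in> carrier G" and F: "F \<subseteq> carrier G"
    and FD: "\<And>f. f \<in> F \<Longrightarrow> x \<otimes> f \<otimes> inv x \<in> D"
    and F_exp: "\<And>f. f \<in> F \<Longrightarrow> f [^] l = \<one>"
    and F_comm: "\<And>f f'. f \<in> F \<Longrightarrow> f' \<in> F \<Longrightarrow> f \<otimes> f' = f' \<otimes> f"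
  shows "card F \<le> l * l"
proof -
  define conj where "conj f = x \<otimes> f \<otimes> inv x" for f
  have "inj_on conj F"
  proof (rule inj_onI)
    fix u v assume "u \<in> F" "v \<in> F" "conj u = conj v"
    then show "u = v" using F x unfolding conj_def by (simp add: subset_iff)
  qed
  moreover have "card (conj ` F) \<le> l * l"
  proof (rule metacyclic_exponent_card[OF fin sD meta l])
    show "conj ` F \<subseteq> D" unfolding conj_def using FD by blast
    show "f [^] l = \<one>" if "f \<in> conj ` F" for f
    proof -
      obtain u where u: "u \<in> F" "f = conj u" using \<open>f \<in> conj ` F\<close> by blast
      then show ?thesis using conj_pow[OF x, of u l] x F F_exp unfolding conj_def by auto
    qed
    show "f \<otimes> f' = f' \<otimes> f" if f: "f \<in> conj ` F" "f' \<in> conj ` F" for f f'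
    proof -
      obtain u v where uv: "u \<in> F" "v \<in> F" "f = conj u" "f' = conj v"
        using f by blast
      then have "u \<in> carrier G" "v \<in> carrier G" "u \<otimes> v = v \<otimes> u"
        using F F_comm by auto
      then show ?thesis
        using conj_mult[OF x, of u v] conj_mult[OF x, of v u] uv(3,4) unfolding conj_def by simp
    qed
  qed
  ultimately show ?thesis by (simp add: card_image)
qed

lemma conjugates_of_exponent:
  fixes l :: nat
  assumes a: "a \<in> carrier G" "a [^] l = \<one>" and s: "s \<in> (\<lambda>g. g \<otimes> a \<otimes> inv g) ` carrier G"
  shows "s \<in> carrier G" "s [^] l = \<one>"
proof -
  obtain g where "g \<in> carrier G" "s = g \<otimes> a \<otimes> inv g" using s by blast
  then show "s \<in> carrier G" "s [^] l = \<one>" using conj_pow[of g a l] a by simp_all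
qed

lemma card_generate_exponent:
  fixes l :: nat
  assumes a: "a \<in> carrier G" "a [^] l = \<one>" and l: "0 < l"
  shows "card (generate G {a}) \<le> l"
proof -
  have "ord a dvd l" using pow_eq_id[OF a(1), of l] a(2) by simp
  then show ?thesis using generate_pow_card[OF a(1)] dvd_imp_le l by simp
qed

lemma generate_commute:
  assumes S: "S \<subseteq> carrier G" and x: "x \<in> carrier G"
    and xS: "\<And>s. s \<in> S \<Longrightarrow> x \<otimes> s = s \<otimes> x" and y: "y \<in> generate G S"
  shows "x \<otimes> y = y \<otimes> x"
  using y
proof (induction rule: generate.induct)
  case one
  then show ?case using x by simp
next
  case (incl h)
  then show ?case by (rule xS)
next
  case (inv h)
  then show ?case using S x xS commute_inv by blast
next
  case (eng h1 h2)
  have h: "h1 \<in> carrier G" "h2 \<in> carrier G"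
    using eng.hyps generate_in_carrier[OF S] by blast+
  have "x \<otimes> (h1 \<otimes> h2) = h1 \<otimes> (x \<otimes> h2)"
    using x h eng.IH(1) by (simp add: m_assoc[symmetric])
  also have "\<dots> = h1 \<otimes> h2 \<otimes> x"
    using x h eng.IH(2) by (simp add: m_assoc)
  finally show ?case .
qed

lemma generate_commutative:
  assumes S: "S \<subseteq> carrier G" and S_comm: "\<And>s t. s \<in> S \<Longrightarrow> t \<in> S \<Longrightarrow> s \<otimes> t = t \<otimes> s"
    and x: "x \<in> generate G S" and y: "y \<in> generate G S"
  shows "x \<otimes> y = y \<otimes> x"
proof -
  have "s \<otimes> x = x \<otimes> s" if "s \<in> S" for s
    using generate_commute[OF S _ _ x] S_comm that S by blast
  moreover have "x \<in> carrier G" using x generate_in_carrier[OF S] by blast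
  ultimately show ?thesis using generate_commute[OF S _ _ y] by metis
qed

lemma generate_exponent:
  fixes l :: nat
  assumes S: "S \<subseteq> carrier G" and S_comm: "\<And>s t. s \<in> S \<Longrightarrow> t \<in> S \<Longrightarrow> s \<otimes> t = t \<otimes> s"
    and S_exp: "\<And>s. s \<in> S \<Longrightarrow> s [^] l = \<one>" and y: "y \<in> generate G S"
  shows "y [^] l = \<one>"
  using y
proof (induction rule: generate.induct)
  case (inv h)
  then show ?case using S S_exp by (simp add: nat_pow_inv subset_iff)
next
  case (eng h1 h2)
  have "h1 \<in> carrier G" "h2 \<in> carrier G"
    using eng.hyps generate_in_carrier[OF S] by blast+
  then show ?case
    using eng generate_commutative[OF S S_comm] by (simp add: pow_mult_distrib)
qed (use S_exp in auto)

lemma subgroup_nat_pow_closed: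
  fixes n :: nat
  assumes "subgroup H G" "h \<in> H"
  shows "h [^] n \<in> H"
  using subgroup_int_pow_closed[OF assms, of "int n"] by (simp add: int_pow_int)

lemma pow_coprime_generates:
  fixes l j :: nat
  assumes a: "a \<in> carrier G" "a [^] l = \<one>" and l: "prime l" and j: "\<not> l dvd j"
  obtains s :: nat where "(a [^] j) [^] s = a"
proof -
  have "j \<noteq> 0" using j by (metis dvd_0_right)
  moreover have "coprime j l"
    using prime_imp_coprime[OF l j] by (simp add: coprime_commute)
  then have "gcd j l = 1" by simp
  ultimately obtain s t :: nat where st: "j * s = l * t + 1"
    using bezout_nat[of j l] by auto
  have "(a [^] j) [^] s = a [^] (l * t) \<otimes> a [^] (1::nat)"
    using a(1) by (simp add: nat_pow_pow nat_pow_mult st)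
  also have "\<dots> = a"
    using a by (simp add: nat_pow_pow[symmetric])
  finally show ?thesis by (rule that)
qed

lemma conj_generator_in_subgroup:
  fixes l :: nat
  assumes fin: "finite (carrier G)" and a: "a \<in> carrier G" "a [^] l = \<one>" and l: "prime l"
    and sD: "subgroup D G" and x: "x \<in> carrier G"
    and u: "u \<in> generate G {a}" "u \<noteq> \<one>" and uD: "x \<otimes> u \<otimes> inv x \<in> D"
  shows "x \<otimes> a \<otimes> inv x \<in> D"
proof -
  obtain j :: nat where j: "u = a [^] j"
    using u(1) generate_pow_on_finite_carrier[OF fin a(1)] by auto
  have "\<not> l dvd j"
  proof
    assume "l dvd j"
    then obtain t where "j = l * t" by blast
    then have "u = \<one>" using j a by (simp add: nat_pow_pow[symmetric])
    with u(2) show False ..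
  qed
  then obtain s :: nat where "u [^] s = a"
    using pow_coprime_generates[OF a l] j by metis
  then have "x \<otimes> a \<otimes> inv x = (x \<otimes> u \<otimes> inv x) [^] s"
    using conj_pow[OF x, of u s] j a(1) by simp
  then show ?thesis using subgroup_nat_pow_closed[OF sD uD] by simp
qed

text \<open>Splitting criterion for \<open>H = \<langle>a\<rangle>\<close> of prime exponent: if \<open>x a x\<inverse> \<notin> D\<close>, then
  \<open>x H x\<inverse> \<inter> D = 1\<close>, i.e. the double coset \<open>D x H\<close> is split.\<close>
lemma split_double_coset:
  fixes l :: nat
  assumes fin: "finite (carrier G)" and a: "a \<in> carrier G" "a [^] l = \<one>" and l: "prime l"
    and sD: "subgroup D G" and x: "x \<in> carrier G" and xa: "x \<otimes> a \<otimes> inv x \<notin> D"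
  shows "card (double_coset G D x (generate G {a})) = card D * card (generate G {a})"
proof -
  define H where "H = generate G {a}"
  have sH: "subgroup H G" unfolding H_def using a by (intro generate_is_subgroup) simp
  have "inj_on (\<lambda>(d, h). d \<otimes> x \<otimes> h) (D \<times> H)"
  proof (rule inj_onI, clarify)
    fix d h d' h' assume dh: "d \<in> D" "h \<in> H" "d' \<in> D" "h' \<in> H"
      and eq: "d \<otimes> x \<otimes> h = d' \<otimes> x \<otimes> h'"
    have G: "d \<in> carrier G" "h \<in> carrier G" "d' \<in> carrier G" "h' \<in> carrier G"
      using dh sD sH subgroup.mem_carrier by metis+
    define u where "u = h' \<otimes> inv h"
    have "x \<otimes> u \<otimes> inv x = inv d' \<otimes> (d' \<otimes> x \<otimes> h') \<otimes> inv h \<otimes> inv x"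
      using G x by (simp add: u_def m_assoc)
    also have "\<dots> = inv d' \<otimes> d"
      unfolding eq[symmetric] using G x by (simp add: m_assoc)
    finally have "x \<otimes> u \<otimes> inv x \<in> D"
      using dh sD by (simp add: subgroup.m_closed subgroup.m_inv_closed)
    moreover have "u \<in> H" unfolding u_def using dh sH by (simp add: subgroup.m_closed subgroup.m_inv_closed)
    ultimately have "u = \<one>"
      using conj_generator_in_subgroup[OF fin a l sD x] xa unfolding H_def by blast
    then have "h' = h" using G inv_solve_right'[of \<one> h' h] unfolding u_def by simp
    moreover from this have "d \<otimes> x = d' \<otimes> x"
      using eq G x right_cancel[of h "d \<otimes> x" "d' \<otimes> x"] by simp
    ultimately show "d = d' \<and> h = h'" using G x by simp
  qed
  then show ?thesis
    unfolding double_coset_eq_image H_def[symmetric] by (simp add: card_image card_cartesian_product)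
qed

text \<open>If all translates \<open>x\<^sub>0 e\<close> (\<open>e \<in> E\<close>) lay in \<open>D x\<^sub>0 H\<close>, then
  \<open>E = F H\<close> for \<open>F = {f \<in> E. x\<^sub>0 f x\<^sub>0\<inverse> \<in> D}\<close>; but \<open>x\<^sub>0 F x\<^sub>0\<inverse>\<close> is a commuting subset of
  exponent \<open>l\<close> of the metacyclic \<open>D\<close>, so \<open>|F| \<le> l\<^sup>2\<close>, a contradiction.\<close>
lemma translate_outside_double_coset:
  fixes l :: nat
  assumes fin: "finite (carrier G)" and sD: "subgroup D G" and meta: "metacyclic_subgroup G D"
    and l: "0 < l" and x0: "x0 \<in> carrier G"
    and sE: "subgroup E G" and E_comm: "\<And>e e'. e \<in> E \<Longrightarrow> e' \<in> E \<Longrightarrow> e \<otimes> e' = e' \<otimes> e"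
    and E_exp: "\<And>e. e \<in> E \<Longrightarrow> e [^] l = \<one>"
    and sH: "subgroup H G" and HE: "H \<subseteq> E" and big: "l * l * card H < card E"
  shows "\<exists>e\<in>E. x0 \<otimes> e \<notin> double_coset G D x0 H"
proof (rule ccontr)
  assume "\<not> (\<exists>e\<in>E. x0 \<otimes> e \<notin> double_coset G D x0 H)"
  then have cover: "x0 \<otimes> e \<in> double_coset G D x0 H" if "e \<in> E" for e
    using that by blast
  have EG: "E \<subseteq> carrier G" and HG: "H \<subseteq> carrier G" using sE sH subgroup.subset by blast+
  define F where "F = {f \<in> E. x0 \<otimes> f \<otimes> inv x0 \<in> D}"
  have "finite E" "finite H" using finite_subset[OF EG fin] finite_subset[OF HG fin] .
  then have finFH: "finite (F \<times> H)" unfolding F_def by simp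
  have cover_FH: "E \<subseteq> (\<lambda>(f, h). f \<otimes> h) ` (F \<times> H)"
  proof
    fix e assume e: "e \<in> E"
    obtain d h where dh: "d \<in> D" "h \<in> H" "x0 \<otimes> e = d \<otimes> x0 \<otimes> h"
      using cover[OF e] unfolding double_coset_def by blast
    have G: "e \<in> carrier G" "h \<in> carrier G" "d \<in> carrier G"
      using e dh EG HG subgroup.mem_carrier[OF sD] by auto
    have "h \<in> E" using dh(2) HE by blast
    then have "e \<otimes> inv h \<in> E"
      using e sE by (simp add: subgroup.m_closed subgroup.m_inv_closed)
    moreover have "x0 \<otimes> (e \<otimes> inv h) \<otimes> inv x0 = d"
    proof -
      have "x0 \<otimes> (e \<otimes> inv h) \<otimes> inv x0 = (x0 \<otimes> e) \<otimes> inv h \<otimes> inv x0"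
        using G x0 by (simp add: m_assoc)
      also have "\<dots> = d"
        unfolding dh(3) using G x0 by (simp add: m_assoc)
      finally show ?thesis .
    qed
    ultimately have "(e \<otimes> inv h, h) \<in> F \<times> H" unfolding F_def using dh(1,2) by simp
    moreover have "e = (\<lambda>(f, h). f \<otimes> h) (e \<otimes> inv h, h)" using G by (simp add: m_assoc)
    ultimately show "e \<in> (\<lambda>(f, h). f \<otimes> h) ` (F \<times> H)" by (rule rev_image_eqI)
  qed
  have "card E \<le> card ((\<lambda>(f, h). f \<otimes> h) ` (F \<times> H))"
    by (rule card_mono[OF finite_imageI[OF finFH] cover_FH])
  also have "\<dots> \<le> card (F \<times> H)" by (rule card_image_le[OF finFH])
  finally have "card E \<le> card (F \<times> H)" .
  moreover have "card F \<le> l * l"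
    by (rule conj_metacyclic_exponent_card[OF fin sD meta l x0])
       (use EG E_exp E_comm in \<open>auto simp: F_def\<close>)
  ultimately have "card E \<le> card F * card H" "card F * card H \<le> l * l * card H"
    by (simp_all add: card_cartesian_product)
  with big show False by linarith
qed

lemma double_coset_self:
  assumes "subgroup A G" "subgroup B G" "x \<in> carrier G"
  shows "x \<in> double_coset G A x B"
proof -
  have "\<one> \<in> A" "\<one> \<in> B" using assms(1,2) subgroup.one_closed by blast+
  then have "\<one> \<otimes> x \<otimes> \<one> \<in> double_coset G A x B"
    unfolding double_coset_def by blast
  then show ?thesis using assms(3) by simp
qed

text \<open>Let \<open>a\<close> have prime exponent \<open>l\<close> and let \<open>S\<close> be a
  set of pairwise commuting conjugates of \<open>a\<close>, containing \<open>a\<close>, which generates a subgroup \<open>E\<close>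
  of order \<open>> l\<^sup>3\<close>.  Then for every metacyclic \<open>D\<close> at least two double cosets \<open>D x \<langle>a\<rangle>\<close> are
  split: \<open>E\<close> does not fit into \<open>D\<close>, so some conjugate \<open>x\<^sub>0 a x\<^sub>0\<inverse>\<close> avoids \<open>D\<close>; and since
  \<open>E\<close> centralises \<open>a\<close>, every \<open>x\<^sub>0 e\<close> (\<open>e \<in> E\<close>) gives a split double coset, not all equal
  to \<open>D x\<^sub>0 \<langle>a\<rangle>\<close>.\<close>
lemma split_count_gt_one:
  fixes l :: nat
  assumes fin: "finite (carrier G)" and l: "prime l" and a: "a \<in> carrier G" "a [^] l = \<one>"
    and sD: "subgroup D G" and meta: "metacyclic_subgroup G D"
    and S_conj: "S \<subseteq> (\<lambda>g. g \<otimes> a \<otimes> inv g) ` carrier G" and aS: "a \<in> S"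
    and S_comm: "\<And>s t. s \<in> S \<Longrightarrow> t \<in> S \<Longrightarrow> s \<otimes> t = t \<otimes> s"
    and big: "l ^ 3 < card (generate G S)"
  shows "1 < split_count G D (generate G {a})"
proof -
  define E H where "E = generate G S" and "H = generate G {a}"
  have S: "S \<subseteq> carrier G" and S_exp: "\<And>s. s \<in> S \<Longrightarrow> s [^] l = \<one>"
    using conjugates_of_exponent[OF a] S_conj by blast+
  have sE: "subgroup E G" unfolding E_def by (rule generate_is_subgroup[OF S])
  have sH: "subgroup H G" unfolding H_def by (rule generate_is_subgroup) (use a in simp)
  have E_comm: "e \<otimes> e' = e' \<otimes> e" if "e \<in> E" "e' \<in> E" for e e'
    by (rule generate_commutative[OF S _ that[unfolded E_def]]) (fact S_comm)
  have E_exp: "e [^] l = \<one>" if "e \<in> E" for e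
    by (rule generate_exponent[OF S _ _ that[unfolded E_def]]) (fact S_comm, fact S_exp)
  have "a \<in> E" unfolding E_def using aS by (rule generate.incl)
  then have HE: "H \<subseteq> E" unfolding H_def by (intro generate_subgroup_incl[OF _ sE]) simp
  have l0: "0 < l" using prime_gt_0_nat[OF l] .
  have "card H \<le> l" unfolding H_def by (rule card_generate_exponent[OF a l0])
  then have "l * l * card H \<le> l ^ 3"
    using mult_le_mono2[of "card H" l "l * l"] by (simp add: power3_eq_cube)
  then have big': "l * l * card H < card E" using big unfolding E_def by linarith
  have "\<not> S \<subseteq> D"
  proof
    assume "S \<subseteq> D"
    then have "E \<subseteq> D" unfolding E_def by (rule generate_subgroup_incl[OF _ sD])
    then have "card E \<le> l * l" using E_exp E_comm by (intro metacyclic_exponent_card[OF fin sD meta l0])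
    moreover have "l * l \<le> l * l * card H"
      using subgroup.finite_imp_card_positive[OF sH fin] by simp
    ultimately show False using big' by linarith
  qed
  then obtain x0 where x0: "x0 \<in> carrier G" "x0 \<otimes> a \<otimes> inv x0 \<notin> D" using S_conj by blast
  obtain e where e: "e \<in> E" "x0 \<otimes> e \<notin> double_coset G D x0 H"
    using translate_outside_double_coset[OF fin sD meta l0 x0(1) sE E_comm E_exp sH HE big'] by blast
  define y where "y = x0 \<otimes> e"
  have eG: "e \<in> carrier G" using subgroup.mem_carrier[OF sE e(1)] .
  then have y: "y \<in> carrier G" unfolding y_def using x0 by simp
  have "y \<otimes> a \<otimes> inv y = x0 \<otimes> (e \<otimes> a) \<otimes> inv e \<otimes> inv x0"
    unfolding y_def using x0 eG a by (simp add: m_assoc inv_mult_group)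
  also have "\<dots> = x0 \<otimes> a \<otimes> inv x0"
    using E_comm[OF e(1) \<open>a \<in> E\<close>] x0 eG a by (simp add: m_assoc)
  finally have "y \<otimes> a \<otimes> inv y = x0 \<otimes> a \<otimes> inv x0" .
  then have "card (double_coset G D y H) = card D * card H"
    using split_double_coset[OF fin a l sD y] x0(2) unfolding H_def by simp
  moreover have "card (double_coset G D x0 H) = card D * card H"
    using split_double_coset[OF fin a l sD x0] unfolding H_def by simp
  moreover have "double_coset G D x0 H \<noteq> double_coset G D y H"
    using double_coset_self[OF sD sH y] e(2) unfolding y_def by blast
  ultimately show ?thesis unfolding H_def by (intro split_count_gt_oneI[OF fin x0(1) y]) (simp_all add: H_def)
qed

end

section \<open>The generators \<open>\<alpha>\<^sub>r\<close> as explicit permutations\<close>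

text \<open>We show that \<open>\<alpha>\<^sub>r = shift l (l\<^sup>r\<^sup>-\<^sup>1)\<close>.\<close>
definition shift :: "nat \<Rightarrow> nat \<Rightarrow> nat \<Rightarrow> nat" where
  "shift l L p = (if 1 \<le> p \<and> p \<le> l * L then (if p + L \<le> l * L then p + L else p + L - l * L) else p)"

definition stride_list :: "nat \<Rightarrow> nat \<Rightarrow> nat \<Rightarrow> nat list" where
  "stride_list l L j = map (\<lambda>k. j + k * L) [0..<l]"

lemma alpha_stride_def:
  "alpha l r = foldr (\<lambda>j f. cycle_of_list (stride_list l (l ^ (r - 1)) j) \<circ> f) [1..<l ^ (r - 1) + 1] id"
  unfolding alpha_def stride_list_def ..

lemma stride_orbit_mem:
  assumes L: "0 < L" and j: "1 \<le> j" "j \<le> L"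
  shows "p \<in> set (stride_list l L j) \<longleftrightarrow> (1 \<le> p \<and> p \<le> l * L \<and> (p - 1) mod L = j - 1)"
  unfolding stride_list_def
proof
  assume "p \<in> set (map (\<lambda>k. j + k * L) [0..<l])"
  then obtain k where k: "k < l" "p = j + k * L" by auto
  have "p \<le> L + k * L" using k j by simp
  also have "\<dots> = (k + 1) * L" by simp
  also have "\<dots> \<le> l * L" using k by (intro mult_right_mono) auto
  finally have "p \<le> l * L" .
  moreover have "(p - 1) mod L = j - 1"
  proof -
    have "p - 1 = (j - 1) + k * L" using k j by simp
    hence "(p - 1) mod L = (j - 1) mod L" by simp
    thus ?thesis using j by simp
  qed
  ultimately show "1 \<le> p \<and> p \<le> l * L \<and> (p - 1) mod L = j - 1" using k j by simp
next
  assume h: "1 \<le> p \<and> p \<le> l * L \<and> (p - 1) mod L = j - 1"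
  define k where "k = (p - 1) div L"
  have pe: "p = j + k * L"
  proof -
    define m where "m = (p - 1) mod L"
    have e: "p - 1 = k * L + m" unfolding k_def m_def by simp
    have "m = j - 1" using h m_def by simp
    thus ?thesis using e h j by linarith
  qed
  have "p - 1 < l * L" using h by linarith
  hence "k < l" unfolding k_def using L by (simp add: div_less_iff_less_mult)
  thus "p \<in> set (map (\<lambda>k. j + k * L) [0..<l])" using pe by auto
qed

lemma stride_cycle_apply:
  assumes L: "0 < L" and j: "1 \<le> j" "j \<le> L"
  shows "cycle_of_list (stride_list l L j) p =
    (if 1 \<le> p \<and> p \<le> l * L \<and> (p - 1) mod L = j - 1 then shift l L p else p)"
proof (cases "1 \<le> p \<and> p \<le> l * L \<and> (p - 1) mod L = j - 1")
  case False
  hence "p \<notin> set (stride_list l L j)" using stride_orbit_mem[OF L j] by blast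
  hence "cycle_of_list (stride_list l L j) p = p" by (rule id_outside_supp)
  thus ?thesis by (subst if_not_P[OF False])
next
  case True
  define cs where "cs = stride_list l L j"
  have dist: "distinct cs" unfolding cs_def stride_list_def using L by (simp add: distinct_map inj_on_def)
  have len: "length cs = l" unfolding cs_def stride_list_def by simp
  have "p \<in> set cs" using True stride_orbit_mem[OF L j] cs_def by blast
  then obtain k where k: "k < l" "p = cs ! k" using in_set_conv_nth[of p cs] len by auto
  have pk: "p = j + k * L" using k unfolding cs_def stride_list_def by simp
  have rot: "map (cycle_of_list cs) cs = rotate1 cs"
    using cyclic_rotation[OF dist, of 1] by simp
  have "cycle_of_list cs p = map (cycle_of_list cs) cs ! k" using k len by simp
  also have "\<dots> = rotate1 cs ! k" using rot by simp
  also have "\<dots> = cs ! (Suc k mod l)" using k len by (simp add: nth_rotate1)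
  also have "\<dots> = j + (Suc k mod l) * L" unfolding cs_def stride_list_def using k by simp
  also have "\<dots> = shift l L p"
  proof (cases "Suc k < l")
    case True
    have "p + L = j + (Suc k) * L" using pk by simp
    moreover have "j + Suc k * L \<le> l * L"
    proof -
      have "j + Suc k * L \<le> L + Suc k * L" using j by simp
      also have "\<dots> = Suc (Suc k) * L" by simp
      also have "\<dots> \<le> l * L" using True by (intro mult_right_mono) auto
      finally show ?thesis .
    qed
    ultimately show ?thesis unfolding shift_def using True pk \<open>1 \<le> p \<and> p \<le> l * L \<and> _\<close> by simp
  next
    case False
    hence kl: "Suc k = l" using k by simp
    have "l * L = Suc k * L" using kl by simp
    hence "l * L = L + k * L" by simp
    hence "p + L = j + l * L" using pk by linarith
    moreover have "l * L < j + l * L" using j by simp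
    ultimately show ?thesis unfolding shift_def using kl \<open>1 \<le> p \<and> p \<le> l * L \<and> _\<close> by simp
  qed
  finally show ?thesis using True cs_def by simp
qed

lemma foldr_comp_right: "foldr (\<lambda>j f. (C j :: 'a \<Rightarrow> 'a) \<circ> f) xs h = foldr (\<lambda>j f. C j \<circ> f) xs id \<circ> h"
  by (induct xs) (simp_all add: comp_assoc)

lemma shift_range:
  assumes "0 < l" "0 < L" "1 \<le> p" "p \<le> l * L"
  shows "1 \<le> shift l L p" "shift l L p \<le> l * L" "(shift l L p - 1) mod L = (p - 1) mod L"
proof -
  have lL: "L \<le> l * L" using assms by simp
  have h1: "p + L - l * L \<le> l * L" using assms lL by linarith
  show "1 \<le> shift l L p" "shift l L p \<le> l * L" unfolding shift_def using assms h1 by auto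
  show "(shift l L p - 1) mod L = (p - 1) mod L"
  proof (cases "p + L \<le> l * L")
    case True
    hence "shift l L p - 1 = (p - 1) + L" unfolding shift_def using assms by simp
    thus ?thesis by simp
  next
    case False
    have e: "l * L = (l - 1) * L + L" using assms by (metis Suc_diff_1 mult_Suc add.commute)
    hence "p - 1 = (shift l L p - 1) + (l - 1) * L" unfolding shift_def using assms False by simp
    thus ?thesis by simp
  qed
qed

lemma stride_cycles_apply:
  assumes l: "0 < l" and L: "0 < L" and m: "m \<le> L"
  shows "foldr (\<lambda>j f. cycle_of_list (stride_list l L j) \<circ> f) [1..<m+1] id p =
    (if 1 \<le> p \<and> p \<le> l * L \<and> (p - 1) mod L < m then shift l L p else p)"
  using m
proof (induct m arbitrary: p)
  case 0 then show ?case by simp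
next
  case (Suc m)
  let ?C = "\<lambda>j. cycle_of_list (stride_list l L j)"
  have IH: "foldr (\<lambda>j f. ?C j \<circ> f) [1..<m+1] id q =
    (if 1 \<le> q \<and> q \<le> l * L \<and> (q - 1) mod L < m then shift l L q else q)" for q
    by (rule Suc.hyps) (use Suc.prems in simp)
  have "[1..<Suc m + 1] = [1..<m+1] @ [Suc m]" by simp
  hence "foldr (\<lambda>j f. ?C j \<circ> f) [1..<Suc m+1] id p = foldr (\<lambda>j f. ?C j \<circ> f) [1..<m+1] id (?C (Suc m) p)"
    using foldr_comp_right[of ?C "[1..<m+1]" "?C (Suc m) \<circ> id"] by simp
  also have "\<dots> = (if 1 \<le> p \<and> p \<le> l * L \<and> (p - 1) mod L < Suc m then shift l L p else p)"
  proof (cases "1 \<le> p \<and> p \<le> l * L \<and> (p - 1) mod L = m")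
    case True
    have c1: "?C (Suc m) p = shift l L p" using stride_cycle_apply[OF L, where j="Suc m" and l=l and p=p] Suc.prems True by simp
    have nc: "\<not> (1 \<le> shift l L p \<and> shift l L p \<le> l * L \<and> (shift l L p - 1) mod L < m)"
      using shift_range[OF l L] True by simp
    have c2: "foldr (\<lambda>j f. ?C j \<circ> f) [1..<m+1] id (shift l L p) = shift l L p"
      using IH[of "shift l L p", unfolded if_not_P[OF nc]] .
    have c3: "1 \<le> p \<and> p \<le> l * L \<and> (p - 1) mod L < Suc m" using True by simp
    show ?thesis unfolding if_P[OF c3] c1 c2 ..
  next
    case False
    have c1: "?C (Suc m) p = p" using stride_cycle_apply[OF L, where j="Suc m" and l=l and p=p] Suc.prems False by auto
    have eq: "(1 \<le> p \<and> p \<le> l * L \<and> (p - 1) mod L < Suc m) = (1 \<le> p \<and> p \<le> l * L \<and> (p - 1) mod L < m)"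
      using False by auto
    show ?thesis unfolding c1 eq by (rule IH)
  qed
  finally show ?case .
qed

lemma alpha_eq:
  assumes "0 < l"
  shows "alpha l r = shift l (l ^ (r - 1))"
proof
  fix p
  have L: "0 < l ^ (r - 1)" using assms by simp
  show "alpha l r p = shift l (l ^ (r - 1)) p"
    unfolding alpha_stride_def using stride_cycles_apply[OF assms L order_refl, of p] L
    by (simp add: shift_def)
qed

lemma foldr_comp_permutes:
  assumes "\<And>j. j \<in> set xs \<Longrightarrow> C j permutes A"
  shows "foldr (\<lambda>j f. C j \<circ> f) xs id permutes A"
  using assms by (induction xs) (simp_all add: permutes_id permutes_compose)

lemma alpha_permutes:
  assumes l: "0 < l" and r: "1 \<le> r" "r \<le> n"
  shows "alpha l r permutes {1..l ^ n}"
proof -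
  define L where "L = l ^ (r - 1)"
  have L0: "0 < L" using l L_def by simp
  have "l * L = l ^ r" unfolding L_def using r by (cases r) auto
  also have "\<dots> \<le> l ^ n" using r l by (intro power_increasing) auto
  finally have lL: "l * L \<le> l ^ n" .
  have "cycle_of_list (stride_list l L j) permutes {1..l ^ n}" if j: "j \<in> set [1..<L + 1]" for j
  proof (rule permutes_subset[OF cycle_permutes])
    show "set (stride_list l L j) \<subseteq> {1..l ^ n}"
      using stride_orbit_mem[OF L0, of j] j lL by auto
  qed
  then show ?thesis unfolding alpha_stride_def L_def[symmetric] by (rule foldr_comp_permutes)
qed

section \<open>Cycles on blocks\<close>

definition block_cycle :: "nat \<Rightarrow> nat \<Rightarrow> nat \<Rightarrow> nat" where
  "block_cycle l s p = (if s < p \<and> p \<le> s + l then (if p < s + l then p + 1 else s + 1) else p)"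

lemma alpha1_block_cycle: "0 < l \<Longrightarrow> alpha l 1 = block_cycle l 0"
  by (rule ext) (auto simp: alpha_eq shift_def block_cycle_def)

lemma block_cycle_pow:
  assumes "0 < l"
  shows "(block_cycle l s ^^ k) p = (if s < p \<and> p \<le> s + l then s + 1 + ((p - s - 1 + k) mod l) else p)"
proof (induct k)
  case 0
  then show ?case by auto
next
  case (Suc k)
  show ?case
  proof (cases "s < p \<and> p \<le> s + l")
    case True
    define m where "m = (p - s - 1 + k) mod l"
    have ml: "m < l" unfolding m_def using assms by simp
    have "(block_cycle l s ^^ Suc k) p = block_cycle l s (s + 1 + m)" using Suc True m_def by simp
    also have "\<dots> = s + 1 + (Suc m mod l)"
      using ml unfolding block_cycle_def by (auto simp: mod_Suc)
    also have "Suc m mod l = (p - s - 1 + Suc k) mod l" unfolding m_def by (simp add: mod_Suc_eq)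
    finally show ?thesis using True by simp
  next
    case False
    have "(block_cycle l s ^^ k) p = p" using Suc False by simp
    hence "(block_cycle l s ^^ Suc k) p = block_cycle l s p" by simp
    also have "\<dots> = p" unfolding block_cycle_def by (subst if_not_P[OF False]) (rule refl)
    finally show ?thesis by (subst if_not_P[OF False])
  qed
qed

lemma block_cycle_pow_order:
  assumes l: "0 < l"
  shows "block_cycle l s ^^ l = id"
proof
  fix p
  show "(block_cycle l s ^^ l) p = id p"
  proof (cases "s < p \<and> p \<le> s + l")
    case True
    then have "p - s - 1 < l" by linarith
    then have "(p - s - 1 + l) mod l = p - s - 1" by simp
    then show ?thesis using block_cycle_pow[OF l] True by simp
  next
    case False
    have "(block_cycle l s ^^ l) p = p"
      using block_cycle_pow[OF l, where s=s and k=l and p=p] by (simp only: if_not_P[OF False])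
    then show ?thesis by simp
  qed
qed

lemma block_cycle_shift_conj:
  assumes "0 < l" "0 < L" "s + l + L \<le> l * L"
  shows "shift l L \<circ> block_cycle l s = block_cycle l (s + L) \<circ> shift l L"
proof
  fix p
  show "(shift l L \<circ> block_cycle l s) p = (block_cycle l (s + L) \<circ> shift l L) p"
    using assms unfolding shift_def block_cycle_def by auto
qed

lemma block_cycle_shift_pow_conj:
  assumes l: "0 < l" and L: "0 < L" and fits: "s + l + j * L \<le> l * L"
  shows "block_cycle l (s + j * L) \<circ> shift l L ^^ j = shift l L ^^ j \<circ> block_cycle l s"
  using fits
proof (induction j)
  case 0
  then show ?case by simp
next
  case (Suc j)
  have "block_cycle l (s + Suc j * L) \<circ> shift l L ^^ Suc j
      = (block_cycle l (s + j * L + L) \<circ> shift l L) \<circ> shift l L ^^ j"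
    by (simp add: algebra_simps comp_assoc)
  also have "\<dots> = shift l L \<circ> (block_cycle l (s + j * L) \<circ> shift l L ^^ j)"
  proof -
    have "s + j * L + l + L \<le> l * L" using Suc.prems by simp
    from block_cycle_shift_conj[OF l L this] show ?thesis by (simp add: comp_assoc[symmetric])
  qed
  also have "\<dots> = shift l L ^^ Suc j \<circ> block_cycle l s"
  proof -
    have "s + l + j * L \<le> l * L" using Suc.prems by simp
    from Suc.IH[OF this] show ?thesis by (simp only: funpow.simps(2) comp_assoc)
  qed
  finally show ?case .
qed

lemma block_cycle_comm:
  assumes "s + l \<le> t"
  shows "block_cycle l s \<circ> block_cycle l t = block_cycle l t \<circ> block_cycle l s"
proof
  fix p
  show "(block_cycle l s \<circ> block_cycle l t) p = (block_cycle l t \<circ> block_cycle l s) p"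
    using assms unfolding block_cycle_def by auto
qed

text \<open>Four
  blocks are what is needed: they give \<open>l\<^sup>4 > l\<^sup>3\<close> commuting conjugates of \<open>\<alpha>\<^sub>1\<close>.\<close>
definition block_rotations :: "nat \<Rightarrow> (nat \<Rightarrow> nat) \<Rightarrow> (nat \<Rightarrow> nat) \<Rightarrow> nat \<Rightarrow> nat" where
  "block_rotations l ofs k = (block_cycle l (ofs 0) ^^ k 0) \<circ> (block_cycle l (ofs 1) ^^ k 1)
                              \<circ> (block_cycle l (ofs 2) ^^ k 2) \<circ> (block_cycle l (ofs 3) ^^ k 3)"

text \<open>The rotation by \<open>k i\<close> on block \<open>i\<close> can be read off at the first point of the block;
  hence distinct exponent vectors give distinct products.\<close>
lemma block_rotations_apply:
  assumes l: "0 < l" and gaps: "\<And>i. i < 3 \<Longrightarrow> ofs i + l \<le> ofs (Suc i)"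
    and k: "\<And>i. i < 4 \<Longrightarrow> k i < l" and i: "i < 4"
  shows "block_rotations l ofs k (ofs i + 1) = ofs i + 1 + k i"
proof -
  have "ofs 0 + l \<le> ofs 1" "ofs 1 + l \<le> ofs 2" "ofs 2 + l \<le> ofs 3"
    using gaps[of 0] gaps[of 1] gaps[of 2] by (simp_all add: numeral_eq_Suc)
  moreover have "k 0 < l" "k 1 < l" "k 2 < l" "k 3 < l" using k by simp_all
  moreover have "i = 0 \<or> i = 1 \<or> i = 2 \<or> i = 3" using i by auto
  ultimately show ?thesis
    using l unfolding block_rotations_def by (elim disjE) (simp_all add: block_cycle_pow)
qed

lemma block_rotations_inj:
  assumes l: "0 < l" and gaps: "\<And>i. i < 3 \<Longrightarrow> ofs i + l \<le> ofs (Suc i)"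
  shows "inj_on (block_rotations l ofs) (PiE {..<4} (\<lambda>_. {..<l}))"
proof (rule inj_onI)
  fix k k' assume k: "k \<in> PiE {..<4} (\<lambda>_. {..<l})" and k': "k' \<in> PiE {..<4} (\<lambda>_. {..<l})"
    and eq: "block_rotations l ofs k = block_rotations l ofs k'"
  have kl: "k i < l" "k' i < l" if "i < 4" for i using k k' that by auto
  have "k i = k' i" if i: "i < 4" for i
  proof -
    have "ofs i + 1 + k i = ofs i + 1 + k' i"
      using block_rotations_apply[of l ofs k i] block_rotations_apply[of l ofs k' i] l gaps kl i eq
      by simp
    then show ?thesis by simp
  qed
  then show "k = k'" using PiE_ext[OF k k'] by auto
qed

section \<open>The group \<open>\<G>\<^sub>n\<close> and its conjugate blocks\<close>

lemma Gn_group: "group (Gn l n)"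
  unfolding Gn_def by (rule group.group_subgroup_generated[OF sym_group_is_group])

lemma Gn_mult [simp]: "x \<otimes>\<^bsub>Gn l n\<^esub> y = x \<circ> y"
  by (simp add: Gn_def subgroup_generated_def sym_group_def)

lemma Gn_one [simp]: "\<one>\<^bsub>Gn l n\<^esub> = id"
  by (simp add: Gn_def subgroup_generated_def sym_group_def)

lemma Gn_pow [simp]: "x [^]\<^bsub>Gn l n\<^esub> (k :: nat) = x ^^ k"
  by (induction k) (simp_all add: funpow_swap1)

lemma Gn_finite: "finite (carrier (Gn l n))"
proof (rule finite_subset)
  show "carrier (Gn l n) \<subseteq> carrier (sym_group (l ^ n))"
    unfolding Gn_def carrier_subgroup_generated
    by (rule group.generate_incl[OF sym_group_is_group]) blast
  show "finite (carrier (sym_group (l ^ n)))"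
    unfolding sym_group_def by (simp add: finite_permutations)
qed

lemma alpha_in_Gn:
  assumes "0 < l" "1 \<le> r" "r \<le> n"
  shows "alpha l r \<in> carrier (Gn l n)"
proof -
  have "alpha l r \<in> carrier (sym_group (l ^ n)) \<inter> {alpha l r | r. 1 \<le> r \<and> r \<le> n}"
    using alpha_permutes[OF assms] assms by (auto simp: sym_group_carrier)
  then show ?thesis unfolding Gn_def carrier_subgroup_generated by (rule generate.incl)
qed

lemma alpha_pow_in_Gn:
  assumes "0 < l" "1 \<le> r" "r \<le> n"
  shows "alpha l r ^^ k \<in> carrier (Gn l n)"
  using monoid.nat_pow_closed[OF group.is_monoid[OF Gn_group] alpha_in_Gn[OF assms], of k] by simp

definition conjugate_blocks :: "nat \<Rightarrow> nat \<Rightarrow> (nat \<Rightarrow> nat) \<Rightarrow> (nat \<Rightarrow> nat \<Rightarrow> nat) \<Rightarrow> bool" where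
  "conjugate_blocks l n ofs g \<longleftrightarrow> ofs 0 = 0 \<and> (\<forall>i<3. ofs i + l \<le> ofs (Suc i)) \<and>
     (\<forall>i<4. g i \<in> carrier (Gn l n) \<and> block_cycle l (ofs i) \<circ> g i = g i \<circ> block_cycle l 0)"

lemma card_generate_blocks:
  assumes l: "0 < l" and gaps: "\<And>i. i < 3 \<Longrightarrow> ofs i + l \<le> ofs (Suc i)"
    and blocks: "\<And>i. i < 4 \<Longrightarrow> block_cycle l (ofs i) \<in> carrier (Gn l n)"
  shows "l ^ 4 \<le> card (generate (Gn l n) ((\<lambda>i. block_cycle l (ofs i)) ` {..<4}))"
proof -
  interpret group "Gn l n" by (rule Gn_group)
  define E where "E = generate (Gn l n) ((\<lambda>i. block_cycle l (ofs i)) ` {..<4})"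
  have sE: "subgroup E (Gn l n)" unfolding E_def using blocks by (intro generate_is_subgroup) auto
  have pow_in_E: "block_cycle l (ofs i) ^^ k \<in> E" if "i < 4" for i k
    using subgroup_nat_pow_closed[OF sE, of "block_cycle l (ofs i)" k] that
    unfolding E_def by (simp add: generate.incl)
  have "block_rotations l ofs k \<in> E" for k
  proof -
    have "block_rotations l ofs k =
        block_cycle l (ofs 0) ^^ k 0 \<otimes>\<^bsub>Gn l n\<^esub> block_cycle l (ofs 1) ^^ k 1
        \<otimes>\<^bsub>Gn l n\<^esub> block_cycle l (ofs 2) ^^ k 2 \<otimes>\<^bsub>Gn l n\<^esub> block_cycle l (ofs 3) ^^ k 3"
      unfolding block_rotations_def by simp
    then show ?thesis
      using pow_in_E[of 0 "k 0"] pow_in_E[of 1 "k 1"] pow_in_E[of 2 "k 2"] pow_in_E[of 3 "k 3"]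
      by (simp del: Gn_mult add: subgroup.m_closed[OF sE])
  qed
  then have "block_rotations l ofs ` PiE {..<4} (\<lambda>_. {..<l}) \<subseteq> E" by blast
  moreover have "finite E" using subgroup.subset[OF sE] Gn_finite finite_subset by blast
  ultimately have "card (block_rotations l ofs ` PiE {..<4} (\<lambda>_. {..<l})) \<le> card E"
    by (rule card_mono[rotated])
  moreover have "card (block_rotations l ofs ` PiE {..<4} (\<lambda>_. {..<l})) = l ^ 4"
    using card_image[OF block_rotations_inj[of l ofs, OF l gaps]] by (simp add: card_PiE)
  ultimately show ?thesis unfolding E_def by simp
qed

lemma block_offsets_disjoint:
  fixes ofs :: "nat \<Rightarrow> nat"
  assumes gaps: "\<And>i. i < 3 \<Longrightarrow> ofs i + l \<le> ofs (Suc i)" and ij: "i < j" "j < 4"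
  shows "ofs i + l \<le> ofs j"
  using ij
proof (induction j)
  case 0
  then show ?case by simp
next
  case (Suc j)
  have step: "ofs j + l \<le> ofs (Suc j)" using gaps Suc.prems by simp
  show ?case
  proof (cases "i = j")
    case True
    then show ?thesis using step by simp
  next
    case False
    then have "ofs i + l \<le> ofs j" using Suc by simp
    then show ?thesis using step by linarith
  qed
qed

lemma split_count_from_conjugate_blocks:
  assumes l: "prime l" and n: "1 \<le> n"
    and sD: "subgroup D (Gn l n)" and meta: "metacyclic_subgroup (Gn l n) D"
    and blocks: "conjugate_blocks l n ofs g"
  shows "1 < split_count (Gn l n) D (Hsub l n)"
proof -
  interpret group "Gn l n" by (rule Gn_group)
  have l0: "0 < l" using prime_gt_0_nat[OF l] .
  have a: "alpha l 1 \<in> carrier (Gn l n)" "alpha l 1 = block_cycle l 0"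
    using alpha_in_Gn[OF l0 order_refl n] alpha1_block_cycle[OF l0] by auto
  have ofs0: "ofs 0 = 0" and gaps: "\<And>i. i < 3 \<Longrightarrow> ofs i + l \<le> ofs (Suc i)"
    and g: "\<And>i. i < 4 \<Longrightarrow> g i \<in> carrier (Gn l n)"
    and g_conj: "\<And>i. i < 4 \<Longrightarrow> block_cycle l (ofs i) \<circ> g i = g i \<circ> block_cycle l 0"
    using blocks unfolding conjugate_blocks_def by auto
  define c where "c i = block_cycle l (ofs i)" for i
  have c_conj: "c i = g i \<otimes>\<^bsub>Gn l n\<^esub> alpha l 1 \<otimes>\<^bsub>Gn l n\<^esub> inv\<^bsub>Gn l n\<^esub> g i" if i: "i < 4" for i
  proof -
    have "c i = c i \<circ> (g i \<otimes>\<^bsub>Gn l n\<^esub> inv\<^bsub>Gn l n\<^esub> g i)" using r_inv[OF g[OF i]] by simp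
    also have "\<dots> = (block_cycle l (ofs i) \<circ> g i) \<circ> inv\<^bsub>Gn l n\<^esub> g i"
      unfolding c_def by (simp add: comp_assoc)
    finally show ?thesis using g_conj[OF i] a(2) by simp
  qed
  have c_carrier: "c i \<in> carrier (Gn l n)" if i: "i < 4" for i
    using c_conj[OF i] m_closed[OF m_closed[OF g[OF i] a(1)] inv_closed[OF g[OF i]]] by simp
  show ?thesis unfolding Hsub_def
  proof (rule split_count_gt_one[OF Gn_finite l a(1) _ sD meta, of "c ` {..<4}"])
    show "alpha l 1 [^]\<^bsub>Gn l n\<^esub> l = \<one>\<^bsub>Gn l n\<^esub>"
      using block_cycle_pow_order[OF l0] a(2) by simp
    show "c ` {..<4} \<subseteq> (\<lambda>x. x \<otimes>\<^bsub>Gn l n\<^esub> alpha l 1 \<otimes>\<^bsub>Gn l n\<^esub> inv\<^bsub>Gn l n\<^esub> x) ` carrier (Gn l n)"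
      using c_conj g by blast
    show "alpha l 1 \<in> c ` {..<4}" by (rule image_eqI[of _ _ 0]) (use a(2) ofs0 in \<open>simp_all add: c_def\<close>)
    show "s \<otimes>\<^bsub>Gn l n\<^esub> t = t \<otimes>\<^bsub>Gn l n\<^esub> s" if st: "s \<in> c ` {..<4}" "t \<in> c ` {..<4}" for s t
    proof -
      obtain i j where ij: "i < 4" "j < 4" "s = c i" "t = c j" using st by blast
      then show ?thesis
        using block_cycle_comm[OF block_offsets_disjoint[of ofs l, OF gaps]] unfolding c_def
        by (cases i j rule: linorder_cases) auto
    qed
    have "l ^ 3 < l ^ 4" using prime_ge_2_nat[OF l] by (simp add: power_strict_increasing)
    also have "\<dots> \<le> card (generate (Gn l n) (c ` {..<4}))"
      unfolding c_def by (rule card_generate_blocks[of l ofs, OF l0 gaps]) (use c_carrier c_def in auto)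
    finally show "l ^ 3 < card (generate (Gn l n) (c ` {..<4}))" .
  qed
qed

lemma conjugate_blocks_alpha2:
  assumes l: "4 \<le> l" and n: "2 \<le> n"
  shows "conjugate_blocks l n (\<lambda>i. i * l) (\<lambda>i. alpha l 2 ^^ i)"
  unfolding conjugate_blocks_def
proof (intro conjI allI impI)
  have l0: "0 < l" using l by simp
  fix i :: nat assume i: "i < 4"
  show "alpha l 2 ^^ i \<in> carrier (Gn l n)" by (rule alpha_pow_in_Gn) (use l0 n in auto)
  have "l + i * l \<le> 4 * l" using i by simp
  also have "\<dots> \<le> l * l" using l by simp
  finally have "0 + l + i * l \<le> l * l" by simp
  from block_cycle_shift_pow_conj[OF l0 l0 this]
  show "block_cycle l (i * l) \<circ> alpha l 2 ^^ i = alpha l 2 ^^ i \<circ> block_cycle l 0"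
    by (simp add: alpha_eq[OF l0])
qed simp_all

lemma conjugate_blocks_alpha3:
  assumes l: "2 \<le> l" and n: "3 \<le> n"
  shows "conjugate_blocks l n (\<lambda>i. (i mod 2) * l + (i div 2) * l\<^sup>2)
           (\<lambda>i. alpha l 3 ^^ (i div 2) \<circ> alpha l 2 ^^ (i mod 2))"
  unfolding conjugate_blocks_def
proof (intro conjI allI impI)
  have l0: "0 < l" using l by simp
  have ll: "2 * l \<le> l * l" using l by simp
  have lll: "2 * l + l\<^sup>2 \<le> l * l\<^sup>2"
  proof -
    have "2 * l + l\<^sup>2 \<le> 2 * l\<^sup>2" using ll by (simp add: power2_eq_square)
    also have "\<dots> \<le> l * l\<^sup>2" using l by simp
    finally show ?thesis .
  qed
  have a2: "alpha l 2 = shift l l" and a3: "alpha l 3 = shift l (l\<^sup>2)"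
    by (simp_all add: alpha_eq[OF l0] numeral_eq_Suc)
  show "i mod 2 * l + i div 2 * l\<^sup>2 + l \<le> Suc i mod 2 * l + Suc i div 2 * l\<^sup>2" if "i < 3" for i
  proof -
    have "i = 0 \<or> i = 1 \<or> i = 2" using that by auto
    then show ?thesis using ll by (auto simp: power2_eq_square mult_2)
  qed
  fix i :: nat assume i: "i < 4"
  define a b where "a = i mod 2" and "b = i div 2"
  have ab: "a \<le> 1" "b \<le> 1" unfolding a_def b_def using i by auto
  have "alpha l 3 ^^ b \<otimes>\<^bsub>Gn l n\<^esub> alpha l 2 ^^ a \<in> carrier (Gn l n)"
    using alpha_pow_in_Gn[of l 3 n b] alpha_pow_in_Gn[of l 2 n a] l0 n
    by (intro monoid.m_closed[OF group.is_monoid[OF Gn_group]]) auto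
  then show "alpha l 3 ^^ (i div 2) \<circ> alpha l 2 ^^ (i mod 2) \<in> carrier (Gn l n)"
    unfolding a_def b_def by simp
  have "0 + l + a * l \<le> l * l" using ab ll by (cases a) (auto simp: mult_2)
  note first = block_cycle_shift_pow_conj[OF l0 l0 this]
  have "a * l + l + b * l\<^sup>2 \<le> l * l\<^sup>2" using ab lll by (cases a; cases b) (auto simp: mult_2)
  note second = block_cycle_shift_pow_conj[OF l0 _ this] l0
  have "block_cycle l (a * l + b * l\<^sup>2) \<circ> (shift l (l\<^sup>2) ^^ b \<circ> shift l l ^^ a)
      = shift l (l\<^sup>2) ^^ b \<circ> (block_cycle l (a * l) \<circ> shift l l ^^ a)"
    using second by (simp add: comp_assoc[symmetric])
  also have "\<dots> = (shift l (l\<^sup>2) ^^ b \<circ> shift l l ^^ a) \<circ> block_cycle l 0"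
    using first by (simp add: comp_assoc)
  finally show "block_cycle l (i mod 2 * l + i div 2 * l\<^sup>2) \<circ> (alpha l 3 ^^ (i div 2) \<circ> alpha l 2 ^^ (i mod 2))
      = (alpha l 3 ^^ (i div 2) \<circ> alpha l 2 ^^ (i mod 2)) \<circ> block_cycle l 0"
    unfolding a_def b_def a2 a3 .
qed simp

theorem mainTheorem15:
  fixes l n :: nat and D :: "(nat \<Rightarrow> nat) set"
  assumes "prime l" and "n \<ge> 2"
    and "n \<ge> 3 \<or> (n = 2 \<and> l \<ge> 5)"
    and "subgroup D (Gn l n)"
    and "metacyclic_subgroup (Gn l n) D"
  shows "split_count (Gn l n) D (Hsub l n) > 1"
proof -
  obtain ofs g where "conjugate_blocks l n ofs g"
  proof (cases "n \<ge> 3")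
    case True
    then show ?thesis using that conjugate_blocks_alpha3 prime_ge_2_nat[OF assms(1)] by blast
  next
    case False
    then have "4 \<le> l" using assms(3) by simp
    then show ?thesis using that conjugate_blocks_alpha2 assms(2) by blast
  qed
  then show ?thesis
    using split_count_from_conjugate_blocks[OF assms(1) _ assms(4,5)] assms(2) by simp
qed

end
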